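(* Let $\gamma$ be the rotation of $\mathbb{R}^2$ through the angle $\pi/2$ about the origin. Then the map sending an overmarked box to its parameters $(\zeta_t,\zeta_b)$ induces an identification of the space of convex marked boxes modulo the action of $\mathscr{G}$ with the $2$-dimensional orbifold $]-1,1[^2/\langle\gamma\rangle$.
   Context: Let $V$ be a 3-dimensional real vector space, $\mathbf{P}(V)$ its projective plane, $\mathbf{P}(V^* )$ the dual plane. For distinct points $a,b$, $ab$ is the line through them; for distinct lines $A,B$, $AB$ is their intersection point. An overmarked box is $\Theta=((p,q,r,s;t,b),(P,Q,R,S;T,B))$ with $p,\dots,b\in\mathbf{P}(V)$, $P,\dots,B\in\mathbf{P}(V^* )$, $P=ts$, $Q=tr$, $R=bq$, $S=bp$, $T=pq$, $B=rs$ and $TB\notin\{p,q,r,s,t,b\}$. A $\Theta$-basis is a basis of $V$, unique up to scaling, in which $p=[-1:1:0]$, $q=[1:1:0]$, $r=[1:0:1]$, $s=[-1:0:1]$; then $t=[\zeta_t:1:0]$, $b=[\zeta_b:0:1]$ with $\zeta_t,\zeta_b\ne\pm1$ (the parameters of $\Theta$). $\Theta$ is convex if $p,q$ separate $t$ and $TB$ on the line $T$ and $r,s$ separate $b$ and $TB$ on the line $B$; equivalently $\zeta_t,\zeta_b\in\,]-1,1[$. A marked box $[\Theta]$ is the orbit of $\Theta$ under the involution $j:((p,q,r,s;t,b),(P,Q,R,S;T,B))\mapsto((q,p,s,r;t,b),(Q,P,S,R;T,B))$; it is convex if $\Theta$ is. The flag variety is $\mathscr{F}=\{([v],[v^*]):v^*(v)=0\}\subset\mathbf{P}(V)\times\mathbf{P}(V^*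 )$. The group $\mathscr{G}$ consists of projective transformations $(x,X)\mapsto(T(x),T^*(X))$ ($T$ induced by $g\in\mathrm{GL}(V)$, $T^*$ its action on lines) and dualities $(x,X)\mapsto(D^*(X),D(x))$, where $D:\mathbf{P}(V)\to\mathbf{P}(V^* )$ is induced by a linear isomorphism $V\to V^*$ with matrix $M$ (in a basis and its dual) and $D^*$ is induced by ${}^tM^{-1}$. $\mathscr{G}$ acts on marked boxes: a projective transformation acts on points by $T$ and on lines by $T^*$; a duality maps $\Theta$ to $((P^*,Q^*,S^*,R^*;T^*,B^* ),(q^*,p^*,r^*,s^*;t^*,b^* ))$ with $X^*=D^*(X)$, $x^*=D(x)$. These commute with $j$. *)

theory Defs
  imports "HOL-Analysis.Analysis"
begin

text \<open>V = real^3. A point of P(V) is a 1-dimensional subspace of V; a point of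
P(V*) (a line) is a 1-dimensional subspace of V* which we identify with real^3
via the dot product, so a covector w acts as v \<mapsto> w \<bullet> v.\<close>

type_synonym vec = "real^3"

definition proj :: "vec \<Rightarrow> vec set" where
  "proj v = span {v}"

definition PP :: "vec set set" where
  "PP = {proj v | v. v \<noteq> 0}"

definition incid :: "vec set \<Rightarrow> vec set \<Rightarrow> bool" where
  "incid x X \<longleftrightarrow> (\<forall>v\<in>x. \<forall>w\<in>X. w \<bullet> v = 0)"

definition join :: "vec set \<Rightarrow> vec set \<Rightarrow> vec set" where
  "join a b = (THE X. X \<in> PP \<and> incid a X \<and> incid b X)"

definition meet :: "vec set \<Rightarrow> vec set \<Rightarrow> vec set" where
  "meet A B = (THE x. x \<in> PP \<and> incid x A \<and> incid x B)"

datatype obox = OBox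
  (bp: "vec set") (bq: "vec set") (br: "vec set") (bs: "vec set") (bt: "vec set") (bb: "vec set")
  (bP: "vec set") (bQ: "vec set") (bR: "vec set") (bS: "vec set") (bT: "vec set") (bB: "vec set")

definition is_obox :: "obox \<Rightarrow> bool" where
  "is_obox \<Theta> \<longleftrightarrow>
     (\<forall>x\<in>{bp \<Theta>, bq \<Theta>, br \<Theta>, bs \<Theta>, bt \<Theta>, bb \<Theta>}. x \<in> PP) \<and>
     (\<forall>X\<in>{bP \<Theta>, bQ \<Theta>, bR \<Theta>, bS \<Theta>, bT \<Theta>, bB \<Theta>}. X \<in> PP) \<and>
     bt \<Theta> \<noteq> bs \<Theta> \<and> bt \<Theta> \<noteq> br \<Theta> \<and> bb \<Theta> \<noteq> bq \<Theta> \<and> bb \<Theta> \<noteq> bp \<Theta> \<and>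
     bp \<Theta> \<noteq> bq \<Theta> \<and> br \<Theta> \<noteq> bs \<Theta> \<and>
     bP \<Theta> = join (bt \<Theta>) (bs \<Theta>) \<and> bQ \<Theta> = join (bt \<Theta>) (br \<Theta>) \<and>
     bR \<Theta> = join (bb \<Theta>) (bq \<Theta>) \<and> bS \<Theta> = join (bb \<Theta>) (bp \<Theta>) \<and>
     bT \<Theta> = join (bp \<Theta>) (bq \<Theta>) \<and> bB \<Theta> = join (br \<Theta>) (bs \<Theta>) \<and>
     bT \<Theta> \<noteq> bB \<Theta> \<and>
     meet (bT \<Theta>) (bB \<Theta>) \<notin> {bp \<Theta>, bq \<Theta>, br \<Theta>, bs \<Theta>, bt \<Theta>, bb \<Theta>}"

text \<open>a, b separate c and d on the line ab: writing c = [\<alpha> a + \<beta> b], d = [\<alpha>' a + \<beta>' b],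
the affine coordinates \<beta>/\<alpha> and \<beta>'/\<alpha>' (a at 0, b at infinity) have opposite signs.\<close>
definition separates :: "vec set \<Rightarrow> vec set \<Rightarrow> vec set \<Rightarrow> vec set \<Rightarrow> bool" where
  "separates a b c d \<longleftrightarrow> a \<noteq> b \<and>
     (\<exists>va vb vc vd (\<alpha>::real) \<beta> \<alpha>' \<beta>'. va \<noteq> 0 \<and> vb \<noteq> 0 \<and>
        a = proj va \<and> b = proj vb \<and> c = proj vc \<and> d = proj vd \<and>
        vc = \<alpha> *\<^sub>R va + \<beta> *\<^sub>R vb \<and> vd = \<alpha>' *\<^sub>R va + \<beta>' *\<^sub>R vb \<and>
        \<alpha> * \<beta> * \<alpha>' * \<beta>' < 0)"

definition convex_box :: "obox \<Rightarrow> bool" where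
  "convex_box \<Theta> \<longleftrightarrow> is_obox \<Theta> \<and>
     separates (bp \<Theta>) (bq \<Theta>) (bt \<Theta>) (meet (bT \<Theta>) (bB \<Theta>)) \<and>
     separates (br \<Theta>) (bs \<Theta>) (bb \<Theta>) (meet (bT \<Theta>) (bB \<Theta>))"

definition vec3 :: "real \<Rightarrow> real \<Rightarrow> real \<Rightarrow> vec" where
  "vec3 x y z = (\<chi> i. if i = 1 then x else if i = 2 then y else z)"

text \<open>A \<Theta>-basis: the columns of the invertible matrix M; [x:y:z] = proj (M *v vec3 x y z).\<close>
definition theta_basis :: "obox \<Rightarrow> real^3^3 \<Rightarrow> bool" where
  "theta_basis \<Theta> M \<longleftrightarrow> invertible M \<and>
     bp \<Theta> = proj (M *v vec3 (-1) 1 0) \<and> bq \<Theta> = proj (M *v vec3 1 1 0) \<and>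
     br \<Theta> = proj (M *v vec3 1 0 1) \<and> bs \<Theta> = proj (M *v vec3 (-1) 0 1)"

definition params :: "obox \<Rightarrow> real \<times> real" where
  "params \<Theta> = (THE z. \<exists>M. theta_basis \<Theta> M \<and>
       bt \<Theta> = proj (M *v vec3 (fst z) 1 0) \<and> bb \<Theta> = proj (M *v vec3 (snd z) 0 1))"

definition jflip :: "obox \<Rightarrow> obox" where
  "jflip \<Theta> = OBox (bq \<Theta>) (bp \<Theta>) (bs \<Theta>) (br \<Theta>) (bt \<Theta>) (bb \<Theta>)
                   (bQ \<Theta>) (bP \<Theta>) (bS \<Theta>) (bR \<Theta>) (bT \<Theta>) (bB \<Theta>)"

definition proj_act :: "real^3^3 \<Rightarrow> obox \<Rightarrow> obox" where
  "proj_act A \<Theta> =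
     (let T = (\<lambda>x. (\<lambda>v. A *v v) ` x); Ts = (\<lambda>X. (\<lambda>w. matrix_inv (transpose A) *v w) ` X) in
      OBox (T (bp \<Theta>)) (T (bq \<Theta>)) (T (br \<Theta>)) (T (bs \<Theta>)) (T (bt \<Theta>)) (T (bb \<Theta>))
           (Ts (bP \<Theta>)) (Ts (bQ \<Theta>)) (Ts (bR \<Theta>)) (Ts (bS \<Theta>)) (Ts (bT \<Theta>)) (Ts (bB \<Theta>)))"

definition dual_act :: "real^3^3 \<Rightarrow> obox \<Rightarrow> obox" where
  "dual_act M \<Theta> =
     (let D = (\<lambda>x. (\<lambda>v. M *v v) ` x); Ds = (\<lambda>X. (\<lambda>w. matrix_inv (transpose M) *v w) ` X) in
      OBox (Ds (bP \<Theta>)) (Ds (bQ \<Theta>)) (Ds (bS \<Theta>)) (Ds (bR \<Theta>)) (Ds (bT \<Theta>)) (Ds (bB \<Theta>))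
           (D (bq \<Theta>)) (D (bp \<Theta>)) (D (br \<Theta>)) (D (bs \<Theta>)) (D (bt \<Theta>)) (D (bb \<Theta>)))"

definition G_equiv :: "obox \<Rightarrow> obox \<Rightarrow> bool" where
  "G_equiv \<Theta> \<Theta>' \<longleftrightarrow> (\<exists>A. invertible A \<and> (\<Theta>' = proj_act A \<Theta> \<or> \<Theta>' = dual_act A \<Theta>))"

definition marked_equiv :: "obox \<Rightarrow> obox \<Rightarrow> bool" where
  "marked_equiv \<Theta> \<Theta>' \<longleftrightarrow> G_equiv \<Theta> \<Theta>' \<or> G_equiv \<Theta> (jflip \<Theta>')"

definition rot :: "real \<times> real \<Rightarrow> real \<times> real" where
  "rot z = (- snd z, fst z)"

end

theory Submission
  imports Defs
begin

text \<open>Every overmarked box has a \<open>\<Theta>\<close>-basis, in which it is the standard box with its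
  parameters \<open>(\<zeta>t, \<zeta>b)\<close>; in these coordinates the two separation conditions say exactly that
  \<open>\<zeta>t\<close> and \<open>\<zeta>b\<close> lie in \<open>]-1, 1[\<close>. A projective transformation only changes the
  \<open>\<Theta>\<close>-basis, \<open>j\<close> replaces the parameters by \<open>(-\<zeta>t, -\<zeta>b)\<close>, and a duality, up to a
  change of basis, replaces them by \<open>(-\<zeta>b, \<zeta>t) = \<gamma>(\<zeta>t, \<zeta>b)\<close>. As the parameters of a
  box do not depend on the choice of \<open>\<Theta>\<close>-basis, two convex marked boxes are equivalent
  exactly when their parameters differ by a power of \<open>\<gamma>\<close>.\<close>

lemma vec3_nth [simp]: "vec3 x y z $ 1 = x" "vec3 x y z $ 2 = y" "vec3 x y z $ 3 = z"
  by (simp_all add: vec3_def)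

lemma vec_eq_iff_3: "(v::vec) = w \<longleftrightarrow> v$1 = w$1 \<and> v$2 = w$2 \<and> v$3 = w$3"
  by (simp add: vec_eq_iff forall_3)

lemma vec3_arith [simp]:
  "vec3 a b c + vec3 d e f = vec3 (a + d) (b + e) (c + f)"
  "vec3 a b c - vec3 d e f = vec3 (a - d) (b - e) (c - f)"
  "- vec3 a b c = vec3 (- a) (- b) (- c)"
  "k *\<^sub>R vec3 a b c = vec3 (k * a) (k * b) (k * c)"
  "vec3 0 0 0 = 0"
  by (simp_all add: vec_eq_iff forall_3)

lemma vec3_eq_iff [simp]: "vec3 a b c = vec3 d e f \<longleftrightarrow> a = d \<and> b = e \<and> c = f"
  by (simp add: vec_eq_iff_3)

lemma vec3_eq_0_iff [simp]: "vec3 a b c = 0 \<longleftrightarrow> a = 0 \<and> b = 0 \<and> c = 0"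
  by (simp add: vec_eq_iff_3)

lemma inner_vec3: "(v::vec) \<bullet> w = v$1 * w$1 + v$2 * w$2 + v$3 * w$3"
  by (simp add: inner_vec_def sum_3)

lemma in_proj_iff: "w \<in> proj v \<longleftrightarrow> (\<exists>c. w = c *\<^sub>R v)"
  by (auto simp: proj_def span_singleton)

lemma proj_mem: "v \<in> proj v"
  by (simp add: proj_def span_base)

lemma proj_eqD: "proj u = proj v \<Longrightarrow> \<exists>c. v = c *\<^sub>R u"
  by (metis proj_mem in_proj_iff)

lemma proj_scaleR [simp]:
  assumes "c \<noteq> 0"
  shows "proj (c *\<^sub>R v) = proj v"
proof -
  have "\<exists>d. k *\<^sub>R v = d *\<^sub>R (c *\<^sub>R v)" for k
    using assms by (intro exI[of _ "k / c"]) simp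
  then show ?thesis
    by (auto simp: in_proj_iff)
qed

lemma proj_uminus [simp]: "proj (- v) = proj v"
  using proj_scaleR[of "-1" v] by simp

lemma PP_E:
  assumes "x \<in> PP"
  obtains v where "v \<noteq> 0" "x = proj v"
  using assms unfolding PP_def by auto

lemma proj_in_PP: "v \<noteq> 0 \<Longrightarrow> proj v \<in> PP"
  unfolding PP_def by auto

lemma incid_proj_iff: "incid (proj v) (proj w) \<longleftrightarrow> w \<bullet> v = 0"
proof
  show "incid (proj v) (proj w) \<Longrightarrow> w \<bullet> v = 0"
    unfolding incid_def using proj_mem by blast
qed (auto simp: incid_def in_proj_iff)

lemma proj_neq_independent:
  assumes "u \<noteq> 0" "v \<noteq> 0" "proj u \<noteq> proj v" and "a *\<^sub>R u + b *\<^sub>R v = 0"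
  shows "a = 0 \<and> b = 0"
proof (cases "b = 0")
  case False
  have "b *\<^sub>R v = (- a) *\<^sub>R u"
    using assms(4) by (simp add: eq_neg_iff_add_eq_0 add.commute)
  then have v: "v = (- a / b) *\<^sub>R u"
    using False by (metis scaleR_scaleR divide_inverse_commute left_inverse scaleR_one)
  have "a \<noteq> 0"
    using False assms(2,4) by auto
  with False have "proj v = proj u"
    unfolding v by (intro proj_scaleR) simp
  with assms(3) show ?thesis by simp
qed (use assms in auto)

section \<open>Joins and meets\<close>

lemma cross3_eq_0_parallel: "u \<noteq> 0 \<Longrightarrow> cross3 u v = 0 \<Longrightarrow> \<exists>k. v = k *\<^sub>R u"
  by (auto simp: cross_eq_0 collinear_lemma)

lemma cross3_nonzero:
  assumes "u \<noteq> 0" "v \<noteq> 0" "proj u \<noteq> proj v"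
  shows "cross3 u v \<noteq> 0"
proof
  assume "cross3 u v = 0"
  then obtain k where "v = k *\<^sub>R u" using cross3_eq_0_parallel assms(1) by blast
  with assms(2,3) show False by (cases "k = 0") auto
qed

lemma proj_orthogonal_eq_cross3:
  assumes "u \<noteq> 0" "v \<noteq> 0" "proj u \<noteq> proj v" "w \<noteq> 0" "w \<bullet> u = 0" "w \<bullet> v = 0"
  shows "proj w = proj (cross3 u v)"
proof -
  have "cross3 w (cross3 u v) = 0"
    using assms(5,6) by (simp add: Lagrange)
  then obtain k where k: "w = k *\<^sub>R cross3 u v"
    using cross3_eq_0_parallel[OF cross3_nonzero[OF assms(1-3)]] cross_skew
    by (metis neg_equal_0_iff_equal)
  with assms(4) have "k \<noteq> 0" by auto
  with k show ?thesis by simp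
qed

lemma join_eq:
  assumes "a \<in> PP" "b \<in> PP" "a \<noteq> b" "X \<in> PP" "incid a X" "incid b X"
  shows "join a b = X"
proof -
  obtain u v where u: "u \<noteq> 0" "a = proj u" and v: "v \<noteq> 0" "b = proj v"
    using assms(1,2) by (metis PP_E)
  have "Y = proj (cross3 u v)" if "Y \<in> PP" "incid a Y" "incid b Y" for Y
    using that u v assms(3)
    by (metis PP_E incid_proj_iff proj_orthogonal_eq_cross3)
  then show ?thesis
    unfolding join_def using assms(4-6) by (intro the_equality) auto
qed

lemma meet_eq:
  assumes "A \<in> PP" "B \<in> PP" "A \<noteq> B" "x \<in> PP" "incid x A" "incid x B"
  shows "meet A B = x"
proof -
  obtain u v where u: "u \<noteq> 0" "A = proj u" and v: "v \<noteq> 0" "B = proj v"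
    using assms(1,2) by (metis PP_E)
  have "y = proj (cross3 u v)" if "y \<in> PP" "incid y A" "incid y B" for y
    using that u v assms(3)
    by (metis PP_E incid_proj_iff inner_commute proj_orthogonal_eq_cross3)
  then show ?thesis
    unfolding meet_def using assms(4-6) by (intro the_equality) auto
qed

lemma join_proj:
  assumes "u \<noteq> 0" "v \<noteq> 0" "proj u \<noteq> proj v"
  shows "join (proj u) (proj v) = proj (cross3 u v)"
  using assms cross3_nonzero[OF assms]
  by (intro join_eq) (auto simp: proj_in_PP incid_proj_iff dot_cross_self)

abbreviation dinv :: "real^'n^'n \<Rightarrow> real^'n^'n" where
  "dinv A \<equiv> matrix_inv (transpose A)"

lemma matrix_inv_right:
  "invertible A \<Longrightarrow> A ** matrix_inv A = mat 1"
  and matrix_inv_left: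
  "invertible A \<Longrightarrow> matrix_inv A ** A = mat 1"
  unfolding invertible_def matrix_inv_def by (metis (mono_tags, lifting) someI_ex)+

lemma matrix_inv_unique:
  fixes A B :: "real^'n^'n"
  assumes "A ** B = mat 1"
  shows "matrix_inv A = B"
proof -
  have A: "invertible A" using assms invertible_right_inverse by blast
  have "matrix_inv A = matrix_inv A ** (A ** B)" by (simp add: assms)
  also have "\<dots> = B" by (simp add: matrix_mul_assoc matrix_inv_left[OF A])
  finally show ?thesis .
qed

lemma invertible_matrix_inv: "invertible (A::real^'n^'n) \<Longrightarrow> invertible (matrix_inv A)"
  using invertible_left_inverse matrix_inv_right by blast

lemma matrix_inv_matrix_inv: "invertible (A::real^'n^'n) \<Longrightarrow> matrix_inv (matrix_inv A) = A"
  by (simp add: matrix_inv_unique matrix_inv_left)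

lemma matrix_inv_mult:
  fixes A B :: "real^'n^'n"
  assumes "invertible A" "invertible B"
  shows "matrix_inv (A ** B) = matrix_inv B ** matrix_inv A"
proof (rule matrix_inv_unique)
  have "A ** B ** (matrix_inv B ** matrix_inv A) = A ** (B ** matrix_inv B) ** matrix_inv A"
    by (simp add: matrix_mul_assoc)
  then show "A ** B ** (matrix_inv B ** matrix_inv A) = mat 1"
    by (simp add: assms matrix_inv_right)
qed

lemma transpose_matrix_inv:
  "invertible (A::real^'n^'n) \<Longrightarrow> transpose (matrix_inv A) = dinv A"
  by (metis matrix_inv_unique matrix_inv_left matrix_transpose_mul transpose_mat)

lemma invertible_dinv: "invertible (A::real^'n^'n) \<Longrightarrow> invertible (dinv A)"
  by (simp add: invertible_matrix_inv transpose_invertible)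

lemma dinv_mult:
  "invertible (A::real^'n^'n) \<Longrightarrow> invertible B \<Longrightarrow> dinv (A ** B) = dinv A ** dinv B"
  by (simp add: matrix_transpose_mul matrix_inv_mult transpose_invertible)

lemma matrix_inv_cancel [simp]:
  "invertible (A::real^'n^'n) \<Longrightarrow> matrix_inv A *v (A *v v) = v"
  "invertible (A::real^'n^'n) \<Longrightarrow> A *v (matrix_inv A *v v) = v"
  by (simp_all add: matrix_vector_mul_assoc matrix_inv_left matrix_inv_right)

lemma inner_dinv_mult:
  "invertible (M::real^'n^'n) \<Longrightarrow> (dinv M *v w) \<bullet> (M *v u) = w \<bullet> u"
  by (metis transpose_matrix_inv dot_lmul_matrix vector_transpose_matrix
      transpose_transpose matrix_inv_cancel(1))

lemma invertible_mult_eq_0_iff: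
  "invertible (M::real^'n^'n) \<Longrightarrow> M *v u = 0 \<longleftrightarrow> u = 0"
  by (metis matrix_inv_cancel(1) matrix_vector_mult_0_right)

lemma image_proj: "(\<lambda>v. (A::real^3^3) *v v) ` proj v = proj (A *v v)"
  by (simp add: proj_def span_linear_image[symmetric])

lemma proj_matrix_eqD:
  assumes "invertible (M::real^3^3)" "proj (M *v u) = proj (M *v v)"
  shows "\<exists>c. v = c *\<^sub>R u"
proof -
  obtain c where "M *v v = M *v (c *\<^sub>R u)"
    using proj_eqD[OF assms(2)] by (auto simp: matrix_vector_mult_scaleR)
  then show ?thesis using assms(1) by (metis matrix_inv_cancel(1))
qed

lemma proj_matrix_neq:
  "invertible (M::real^3^3) \<Longrightarrow> \<forall>c. v \<noteq> c *\<^sub>R u \<Longrightarrow> proj (M *v u) \<noteq> proj (M *v v)"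
  using proj_matrix_eqD by blast

lemma proj_matrix_in_PP: "invertible (M::real^3^3) \<Longrightarrow> u \<noteq> 0 \<Longrightarrow> proj (M *v u) \<in> PP"
  by (simp add: proj_in_PP invertible_mult_eq_0_iff)

lemma incid_matrix_iff:
  "invertible (M::real^3^3) \<Longrightarrow> incid (proj (M *v u)) (proj (dinv M *v w)) \<longleftrightarrow> w \<bullet> u = 0"
  by (simp add: incid_proj_iff inner_dinv_mult)

lemma join_matrix_image:
  assumes M: "invertible (M::real^3^3)" and "w \<noteq> 0" "w \<bullet> u = 0" "w \<bullet> v = 0"
    and "u \<noteq> 0" "\<forall>c. v \<noteq> c *\<^sub>R u"
  shows "join (proj (M *v u)) (proj (M *v v)) = proj (dinv M *v w)"
proof (rule join_eq)
  have "v \<noteq> 0" using assms(6) by (metis scale_zero_left)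
  with assms show "proj (M *v u) \<in> PP" "proj (M *v v) \<in> PP" "proj (dinv M *v w) \<in> PP"
    by (simp_all add: proj_matrix_in_PP invertible_dinv)
  show "proj (M *v u) \<noteq> proj (M *v v)"
    using proj_matrix_neq[OF M assms(6)] .
  show "incid (proj (M *v u)) (proj (dinv M *v w))" "incid (proj (M *v v)) (proj (dinv M *v w))"
    using incid_matrix_iff[OF M] assms by auto
qed

lemma meet_matrix_image:
  assumes M: "invertible (M::real^3^3)" and "u \<noteq> 0" "w \<bullet> u = 0" "w' \<bullet> u = 0"
    and "w \<noteq> 0" "\<forall>c. w' \<noteq> c *\<^sub>R w"
  shows "meet (proj (dinv M *v w)) (proj (dinv M *v w')) = proj (M *v u)"
proof (rule meet_eq)
  have "w' \<noteq> 0" using assms(6) by (metis scale_zero_left)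
  with assms show "proj (dinv M *v w) \<in> PP" "proj (dinv M *v w') \<in> PP" "proj (M *v u) \<in> PP"
    by (simp_all add: proj_matrix_in_PP invertible_dinv)
  show "proj (dinv M *v w) \<noteq> proj (dinv M *v w')"
    using proj_matrix_neq[OF invertible_dinv[OF M] assms(6)] .
  show "incid (proj (M *v u)) (proj (dinv M *v w))" "incid (proj (M *v u)) (proj (dinv M *v w'))"
    using incid_matrix_iff[OF M] assms by auto
qed

lemma proj_matrix_rescale:
  "c \<noteq> 0 \<Longrightarrow> u = c *\<^sub>R v \<Longrightarrow> proj ((A::real^3^3) *v u) = proj (A *v v)"
  by (simp add: matrix_vector_mult_scaleR)

lemma transpose_dinv: "invertible (A::real^'n^'n) \<Longrightarrow> transpose (dinv A) = matrix_inv A"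
  by (metis transpose_matrix_inv transpose_transpose)

lemma proj_dinv_eq:
  assumes "invertible (Y::real^3^3)" "transpose Y *v v = c *\<^sub>R w" "c \<noteq> 0"
  shows "proj (dinv Y *v w) = proj v"
proof -
  have "v = dinv Y *v (transpose Y *v v)"
    by (rule matrix_inv_cancel(1)[OF transpose_invertible[OF assms(1)], symmetric])
  also have "\<dots> = c *\<^sub>R (dinv Y *v w)"
    by (simp only: assms(2) matrix_vector_mult_scaleR)
  finally show ?thesis
    using assms(3) by simp
qed

section \<open>Separation\<close>

lemma separates_imp_pos_lincomb:
  assumes u: "u \<noteq> 0" and v: "v \<noteq> 0" and uv: "proj u \<noteq> proj v"
    and "separates (proj u) (proj v) x (proj (u - v))"
  obtains a b where "0 < a * b" "x = proj (a *\<^sub>R u + b *\<^sub>R v)"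
proof -
  obtain va vb vc vd \<alpha> \<beta> \<alpha>' \<beta>' where
    va: "va \<noteq> 0" "proj u = proj va" and vb: "vb \<noteq> 0" "proj v = proj vb" and
    x: "x = proj vc" "vc = \<alpha> *\<^sub>R va + \<beta> *\<^sub>R vb" and
    vd: "proj (u - v) = proj vd" "vd = \<alpha>' *\<^sub>R va + \<beta>' *\<^sub>R vb" and
    neg: "\<alpha> * \<beta> * \<alpha>' * \<beta>' < 0"
    using assms(4) unfolding separates_def by blast
  obtain l m k where l: "va = l *\<^sub>R u" and m: "vb = m *\<^sub>R v" and k: "vd = k *\<^sub>R (u - v)"
    using proj_eqD va(2) vb(2) vd(1) by metis
  have "(\<alpha>' * l - k) *\<^sub>R u + (\<beta>' * m + k) *\<^sub>R v = 0"
    using vd(2) k l m by (simp add: algebra_simps)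
  then have "\<alpha>' * l - k = 0 \<and> \<beta>' * m + k = 0"
    by (rule proj_neq_independent[OF u v uv])
  then have "\<alpha>' * l = k" "\<beta>' * m = - k"
    by auto
  then have "- (k * k) = (\<alpha>' * l) * (\<beta>' * m)"
    by simp
  then have "(\<alpha> * l) * (\<beta> * m) * (- (k * k)) = \<alpha> * \<beta> * \<alpha>' * \<beta>' * ((l * m) * (l * m))"
    by (simp only:) (simp add: algebra_simps)
  also have "\<dots> < 0"
  proof -
    have "l * m \<noteq> 0"
      using va(1) vb(1) l m by auto
    then show ?thesis
      using neg mult_neg_pos not_real_square_gt_zero by blast
  qed
  finally have "0 < (\<alpha> * l) * (\<beta> * m)"
    by (metis mult_nonpos_nonpos neg_le_0_iff_le not_less zero_le_square)
  moreover have "x = proj ((\<alpha> * l) *\<^sub>R u + (\<beta> * m) *\<^sub>R v)"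
    unfolding x l m by simp
  ultimately show ?thesis
    using that by blast
qed

lemma proj_pos_lincomb:
  assumes "0 < a * b"
  obtains z where "-1 < z" "z < 1"
    "proj (a *\<^sub>R u + b *\<^sub>R v) = proj ((1 - z) *\<^sub>R u + (1 + z) *\<^sub>R v)"
proof -
  have "0 < a \<and> 0 < b \<or> a < 0 \<and> b < 0"
    using assms by (simp add: zero_less_mult_iff)
  then have ab: "a + b \<noteq> 0" and z: "-1 < (b - a) / (a + b)" "(b - a) / (a + b) < 1"
    by (auto simp: divide_simps)
  let ?z = "(b - a) / (a + b)"
  have "1 - ?z = (2 / (a + b)) * a" "1 + ?z = (2 / (a + b)) * b"
    using ab by (simp_all add: field_simps)
  then have "(1 - ?z) *\<^sub>R u + (1 + ?z) *\<^sub>R v = (2 / (a + b)) *\<^sub>R (a *\<^sub>R u + b *\<^sub>R v)"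
    by (simp add: scaleR_add_right)
  with ab z that show ?thesis
    by simp
qed

lemma separates_iff:
  assumes u: "u \<noteq> 0" and v: "v \<noteq> 0" and uv: "proj u \<noteq> proj v"
  shows "separates (proj u) (proj v) x (proj (u - v)) \<longleftrightarrow>
    (\<exists>z. -1 < z \<and> z < 1 \<and> x = proj ((1 - z) *\<^sub>R u + (1 + z) *\<^sub>R v))"
proof
  assume "separates (proj u) (proj v) x (proj (u - v))"
  then obtain a b where "0 < a * b" "x = proj (a *\<^sub>R u + b *\<^sub>R v)"
    using separates_imp_pos_lincomb[OF u v uv] by blast
  then show "\<exists>z. -1 < z \<and> z < 1 \<and> x = proj ((1 - z) *\<^sub>R u + (1 + z) *\<^sub>R v)"
    by (metis proj_pos_lincomb)
next
  assume "\<exists>z. -1 < z \<and> z < 1 \<and> x = proj ((1 - z) *\<^sub>R u + (1 + z) *\<^sub>R v)"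
  then obtain z where z: "-1 < z" "z < 1" "x = proj ((1 - z) *\<^sub>R u + (1 + z) *\<^sub>R v)"
    by blast
  have "(1 - z) * (1 + z) * 1 * (- 1) < 0"
    using z by (simp add: mult_pos_pos)
  then have "separates (proj u) (proj v) (proj ((1 - z) *\<^sub>R u + (1 + z) *\<^sub>R v))
      (proj (1 *\<^sub>R u + (- 1) *\<^sub>R v))"
    unfolding separates_def using u v uv by fast
  then show "separates (proj u) (proj v) x (proj (u - v))"
    using z(3) by simp
qed

section \<open>Standard boxes\<close>

text \<open>The lines are
  given in the dual coordinates: e.g. \<open>(1, -zt, 1)\<close> is the cross product of the coordinates
  \<open>(zt, 1, 0)\<close> of \<open>t\<close> and \<open>(-1, 0, 1)\<close> of \<open>s\<close>.\<close>
definition std_box :: "real^3^3 \<Rightarrow> real \<Rightarrow> real \<Rightarrow> obox" where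
  "std_box M zt zb = OBox
     (proj (M *v vec3 (-1) 1 0)) (proj (M *v vec3 1 1 0))
     (proj (M *v vec3 1 0 1)) (proj (M *v vec3 (-1) 0 1))
     (proj (M *v vec3 zt 1 0)) (proj (M *v vec3 zb 0 1))
     (proj (dinv M *v vec3 1 (-zt) 1)) (proj (dinv M *v vec3 1 (-zt) (-1)))
     (proj (dinv M *v vec3 (-1) 1 zb)) (proj (dinv M *v vec3 (-1) (-1) zb))
     (proj (dinv M *v vec3 0 0 1)) (proj (dinv M *v vec3 0 1 0))"

lemma std_box_sel [simp]:
  "bp (std_box M zt zb) = proj (M *v vec3 (-1) 1 0)"
  "bq (std_box M zt zb) = proj (M *v vec3 1 1 0)"
  "br (std_box M zt zb) = proj (M *v vec3 1 0 1)"
  "bs (std_box M zt zb) = proj (M *v vec3 (-1) 0 1)"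
  "bt (std_box M zt zb) = proj (M *v vec3 zt 1 0)"
  "bb (std_box M zt zb) = proj (M *v vec3 zb 0 1)"
  "bP (std_box M zt zb) = proj (dinv M *v vec3 1 (-zt) 1)"
  "bQ (std_box M zt zb) = proj (dinv M *v vec3 1 (-zt) (-1))"
  "bR (std_box M zt zb) = proj (dinv M *v vec3 (-1) 1 zb)"
  "bS (std_box M zt zb) = proj (dinv M *v vec3 (-1) (-1) zb)"
  "bT (std_box M zt zb) = proj (dinv M *v vec3 0 0 1)"
  "bB (std_box M zt zb) = proj (dinv M *v vec3 0 1 0)"
  by (simp_all add: std_box_def)

lemma meet_std_box:
  "invertible M \<Longrightarrow> meet (bT (std_box M zt zb)) (bB (std_box M zt zb)) = proj (M *v vec3 1 0 0)"
  by (simp, rule meet_matrix_image) (simp_all add: inner_vec3 vec_eq_iff_3)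

lemma is_obox_std_box:
  assumes M: "invertible M" and "zt \<noteq> 1" "zt \<noteq> -1" "zb \<noteq> 1" "zb \<noteq> -1"
  shows "is_obox (std_box M zt zb)"
  unfolding is_obox_def meet_std_box[OF M] unfolding std_box_sel
  apply (intro conjI ballI)
      apply (auto simp: proj_matrix_in_PP[OF M] proj_matrix_in_PP[OF invertible_dinv[OF M]])[2]
    apply (rule proj_matrix_neq[OF M]; use assms in \<open>simp add: vec_eq_iff_3\<close>)+
    apply (rule join_matrix_image[OF M, symmetric]; use assms in \<open>simp add: inner_vec3 vec_eq_iff_3\<close>)+
   apply (rule proj_matrix_neq[OF invertible_dinv[OF M]]; simp add: vec_eq_iff_3)
  apply (simp only: insert_iff empty_iff de_Morgan_disj not_False_eq_True)
  apply (intro conjI TrueI; rule proj_matrix_neq[OF M]; use assms in \<open>simp add: vec_eq_iff_3\<close>)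
  done

lemma separates_std_box_top:
  assumes M: "invertible M"
  shows "separates (proj (M *v vec3 (-1) 1 0)) (proj (M *v vec3 1 1 0)) x (proj (M *v vec3 1 0 0))
    \<longleftrightarrow> (\<exists>z. -1 < z \<and> z < 1 \<and> x = proj (M *v vec3 z 1 0))"
proof -
  let ?u = "M *v vec3 (-1) 1 0" and ?v = "M *v vec3 1 1 0"
  have uv: "?u \<noteq> 0" "?v \<noteq> 0" "proj ?u \<noteq> proj ?v"
    using M by (simp_all add: invertible_mult_eq_0_iff proj_matrix_neq)
  have "?u - ?v = (- 2) *\<^sub>R (M *v vec3 1 0 0)"
    by (simp add: matrix_vector_mult_diff_distrib[symmetric] matrix_vector_mult_scaleR[symmetric])
  moreover have "(1 - z) *\<^sub>R ?u + (1 + z) *\<^sub>R ?v = 2 *\<^sub>R (M *v vec3 z 1 0)" for z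
    by (simp add: matrix_vector_mult_scaleR[symmetric] matrix_vector_right_distrib[symmetric]
        algebra_simps)
  ultimately show ?thesis
    using separates_iff[OF uv] by simp
qed

lemma separates_std_box_bottom:
  assumes M: "invertible M"
  shows "separates (proj (M *v vec3 1 0 1)) (proj (M *v vec3 (-1) 0 1)) x (proj (M *v vec3 1 0 0))
    \<longleftrightarrow> (\<exists>z. -1 < z \<and> z < 1 \<and> x = proj (M *v vec3 z 0 1))"
proof -
  let ?u = "M *v vec3 1 0 1" and ?v = "M *v vec3 (-1) 0 1"
  have uv: "?u \<noteq> 0" "?v \<noteq> 0" "proj ?u \<noteq> proj ?v"
    using M by (simp_all add: invertible_mult_eq_0_iff proj_matrix_neq)
  have "?u - ?v = 2 *\<^sub>R (M *v vec3 1 0 0)"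
    by (simp add: matrix_vector_mult_diff_distrib[symmetric] matrix_vector_mult_scaleR[symmetric])
  moreover have "(1 - z) *\<^sub>R ?u + (1 + z) *\<^sub>R ?v = 2 *\<^sub>R (M *v vec3 (- z) 0 1)" for z
    by (simp add: matrix_vector_mult_scaleR[symmetric] matrix_vector_right_distrib[symmetric]
        algebra_simps)
  ultimately have "separates (proj ?u) (proj ?v) x (proj (M *v vec3 1 0 0))
      \<longleftrightarrow> (\<exists>z. -1 < z \<and> z < 1 \<and> x = proj (M *v vec3 (- z) 0 1))"
    using separates_iff[OF uv] by simp
  also have "\<dots> \<longleftrightarrow> (\<exists>z. -1 < z \<and> z < 1 \<and> x = proj (M *v vec3 z 0 1))"
    by (metis minus_minus neg_less_iff_less)
  finally show ?thesis .
qed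

lemma convex_std_box:
  assumes M: "invertible M" and "-1 < zt" "zt < 1" "-1 < zb" "zb < 1"
  shows "convex_box (std_box M zt zb)"
  unfolding convex_box_def meet_std_box[OF M]
  using assms
  by (auto simp: is_obox_std_box separates_std_box_top separates_std_box_bottom)

lemma frame_matrix_unique:
  assumes M: "invertible M" and K: "invertible K"
    and "proj (M *v vec3 (-1) 1 0) = proj (K *v vec3 (-1) 1 0)"
    "proj (M *v vec3 1 1 0) = proj (K *v vec3 1 1 0)"
    "proj (M *v vec3 1 0 1) = proj (K *v vec3 1 0 1)"
    "proj (M *v vec3 (-1) 0 1) = proj (K *v vec3 (-1) 0 1)"
  obtains c where "c \<noteq> 0" "\<And>v. K *v v = c *\<^sub>R (M *v v)"
proof -
  obtain a1 a2 a3 a4 where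
    a1: "K *v vec3 (-1) 1 0 = a1 *\<^sub>R (M *v vec3 (-1) 1 0)" and
    a2: "K *v vec3 1 1 0 = a2 *\<^sub>R (M *v vec3 1 1 0)" and
    a3: "K *v vec3 1 0 1 = a3 *\<^sub>R (M *v vec3 1 0 1)" and
    a4: "K *v vec3 (-1) 0 1 = a4 *\<^sub>R (M *v vec3 (-1) 0 1)"
    using assms(3-6) by (metis proj_eqD)
  \<comment> \<open>The frame vectors satisfy \<open>p - q + r - s = 0\<close>, which forces \<open>a1 = a2 = a3 = a4\<close>.\<close>
  have "0 = K *v vec3 (-1) 1 0 - K *v vec3 1 1 0 + K *v vec3 1 0 1 - K *v vec3 (-1) 0 1"
    by (simp add: matrix_vector_mult_diff_distrib[symmetric] matrix_vector_right_distrib[symmetric])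
  also have "\<dots> = M *v (a1 *\<^sub>R vec3 (-1) 1 0 - a2 *\<^sub>R vec3 1 1 0 + a3 *\<^sub>R vec3 1 0 1
      - a4 *\<^sub>R vec3 (-1) 0 1)"
    by (simp only: a1 a2 a3 a4 matrix_vector_mult_diff_distrib matrix_vector_right_distrib
        matrix_vector_mult_scaleR)
  finally have "a1 *\<^sub>R vec3 (-1) 1 0 - a2 *\<^sub>R vec3 1 1 0 + a3 *\<^sub>R vec3 1 0 1
      - a4 *\<^sub>R vec3 (-1) 0 1 = 0"
    using M invertible_mult_eq_0_iff by metis
  then have a: "a2 = a1" "a3 = a1" "a4 = a1"
    by simp_all
  have "a1 \<noteq> 0"
    using a1 K by (auto simp: invertible_mult_eq_0_iff)
  moreover have "K *v v = a1 *\<^sub>R (M *v v)" for v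
  proof -
    define w where "w = ((v$2 - v$1 + v$3) / 2) *\<^sub>R vec3 (-1) 1 0
      + ((v$2 + v$1 - v$3) / 2) *\<^sub>R vec3 1 1 0 + v$3 *\<^sub>R vec3 1 0 1"
    have "v = w"
      unfolding w_def by (simp add: vec_eq_iff_3 field_simps)
    moreover have "K *v w = a1 *\<^sub>R (M *v w)"
      unfolding w_def
      by (simp only: matrix_vector_right_distrib matrix_vector_mult_scaleR a1 a2 a3 a)
        (simp add: scaleR_add_right mult.commute)
    ultimately show ?thesis by simp
  qed
  ultimately show ?thesis using that by blast
qed

lemma params_std_box:
  assumes M: "invertible M"
  shows "params (std_box M zt zb) = (zt, zb)"
  unfolding params_def
proof (rule the_equality)
  show "\<exists>K. theta_basis (std_box M zt zb) K \<and>
      bt (std_box M zt zb) = proj (K *v vec3 (fst (zt, zb)) 1 0) \<and>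
      bb (std_box M zt zb) = proj (K *v vec3 (snd (zt, zb)) 0 1)"
    using M by (auto simp: theta_basis_def)
next
  fix z assume "\<exists>K. theta_basis (std_box M zt zb) K \<and>
      bt (std_box M zt zb) = proj (K *v vec3 (fst z) 1 0) \<and>
      bb (std_box M zt zb) = proj (K *v vec3 (snd z) 0 1)"
  then obtain K where K: "theta_basis (std_box M zt zb) K"
    and t: "proj (M *v vec3 zt 1 0) = proj (K *v vec3 (fst z) 1 0)"
    and b: "proj (M *v vec3 zb 0 1) = proj (K *v vec3 (snd z) 0 1)"
    by auto
  obtain c where "c \<noteq> 0" and c: "\<And>v. K *v v = c *\<^sub>R (M *v v)"
    using frame_matrix_unique[OF M] K unfolding theta_basis_def by auto
  then have "proj (M *v vec3 zt 1 0) = proj (M *v vec3 (fst z) 1 0)"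
    "proj (M *v vec3 zb 0 1) = proj (M *v vec3 (snd z) 0 1)"
    using t b by simp_all
  then show "z = (zt, zb)"
    by (auto dest!: proj_matrix_eqD[OF M] simp: vec_eq_iff_3 prod_eq_iff)
qed

section \<open>Every convex box is standard\<close>

definition columns3 :: "vec \<Rightarrow> vec \<Rightarrow> vec \<Rightarrow> real^3^3" where
  "columns3 a b c = (\<chi> i. vec3 (a$i) (b$i) (c$i))"

lemma columns3_mult: "columns3 a b c *v vec3 x y z = x *\<^sub>R a + y *\<^sub>R b + z *\<^sub>R c"
  by (simp add: columns3_def matrix_vector_mult_def vec_eq_iff_3 sum_3 algebra_simps)

lemma det_columns3: "det (columns3 a b c) = cross3 a b \<bullet> c"
  by (simp add: det_3 columns3_def cross3_simps)

text \<open>With \<open>p', q', r', s'\<close> the representatives below, \<open>p' + q' = nB \<times> nT\<close> and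
  \<open>r' + s' = nT \<times> nB\<close> by the Lagrange identity, so \<open>p' + q' + r' + s' = 0\<close>; the columns
  \<open>nT \<times> nB, p' - q', r' - s'\<close> then map the frame vectors to \<open>2p', -2q', 2r', -2s'\<close>.\<close>
lemma frame_matrix:
  fixes vp vq vr vs :: vec
  assumes "cross3 vp vq \<bullet> vr \<noteq> 0" "cross3 vp vq \<bullet> vs \<noteq> 0"
    "cross3 vr vs \<bullet> vp \<noteq> 0" "cross3 vr vs \<bullet> vq \<noteq> 0"
  obtains M where "invertible M"
    "proj (M *v vec3 (-1) 1 0) = proj vp" "proj (M *v vec3 1 1 0) = proj vq"
    "proj (M *v vec3 1 0 1) = proj vr" "proj (M *v vec3 (-1) 0 1) = proj vs"
    "M *v vec3 1 0 0 = cross3 (cross3 vp vq) (cross3 vr vs)"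
proof -
  define nT nB where "nT = cross3 vp vq" and "nB = cross3 vr vs"
  define p' q' r' s' where "p' = (nB \<bullet> vq) *\<^sub>R vp" and "q' = (- (nB \<bullet> vp)) *\<^sub>R vq"
    and "r' = (nT \<bullet> vs) *\<^sub>R vr" and "s' = (- (nT \<bullet> vr)) *\<^sub>R vs"
  have pq: "p' + q' = cross3 nB nT"
    unfolding p'_def q'_def nT_def by (simp add: Lagrange)
  have rs: "r' + s' = cross3 nT nB"
    unfolding r'_def s'_def nB_def by (simp add: Lagrange)
  define M where "M = columns3 (cross3 nT nB) (p' - q') (r' - s')"
  have e1: "cross3 nT nB = - (p' + q')"
    using pq cross_skew[of nT nB] by simp
  have "s' = (r' + s') - r'"
    by simp
  then have s': "s' = - (p' + q') - r'"
    using rs e1 by simp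
  have "det M = 4 * (cross3 p' q' \<bullet> r')"
    unfolding M_def det_columns3 e1 s'
    by (simp add: inner_vec3 cross_components algebra_simps)
  also have "\<dots> = 4 * ((nB \<bullet> vq) * (- (nB \<bullet> vp)) * (nT \<bullet> vs)) * (nT \<bullet> vr)"
    unfolding p'_def q'_def r'_def nT_def
    by (simp add: cross_mult_left cross_mult_right)
  finally have "det M \<noteq> 0"
    using assms unfolding nT_def nB_def by simp
  then have "invertible M"
    by (simp add: invertible_det_nz)
  moreover have "M *v vec3 (-1) 1 0 = 2 *\<^sub>R p'" "M *v vec3 1 1 0 = (-2) *\<^sub>R q'"
    "M *v vec3 1 0 1 = 2 *\<^sub>R r'" "M *v vec3 (-1) 0 1 = (-2) *\<^sub>R s'"
    "M *v vec3 1 0 0 = cross3 nT nB"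
    unfolding M_def columns3_mult e1 s' by (simp_all add: algebra_simps scaleR_conv_of_real)
  ultimately show ?thesis
    using that assms unfolding p'_def q'_def r'_def s'_def nT_def nB_def
    by (simp add: inner_commute)
qed

lemma is_obox_in_PP:
  assumes "is_obox \<Theta>"
  shows "bp \<Theta> \<in> PP" "bq \<Theta> \<in> PP" "br \<Theta> \<in> PP" "bs \<Theta> \<in> PP" "bT \<Theta> \<in> PP" "bB \<Theta> \<in> PP"
  using assms unfolding is_obox_def by (elim conjE; simp only: ball_simps insert_iff)+

lemma is_obox_distinct:
  assumes "is_obox \<Theta>"
  shows "bp \<Theta> \<noteq> bq \<Theta>" "br \<Theta> \<noteq> bs \<Theta>" "bT \<Theta> \<noteq> bB \<Theta>"
  using assms unfolding is_obox_def by (elim conjE; simp only:)+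

lemma is_obox_joins:
  assumes "is_obox \<Theta>"
  shows "bT \<Theta> = join (bp \<Theta>) (bq \<Theta>)" "bB \<Theta> = join (br \<Theta>) (bs \<Theta>)"
    "bP \<Theta> = join (bt \<Theta>) (bs \<Theta>)" "bQ \<Theta> = join (bt \<Theta>) (br \<Theta>)"
    "bR \<Theta> = join (bb \<Theta>) (bq \<Theta>)" "bS \<Theta> = join (bb \<Theta>) (bp \<Theta>)"
  using assms unfolding is_obox_def by (elim conjE; simp only:)+

lemma is_obox_meet_notin:
  assumes "is_obox \<Theta>"
  shows "meet (bT \<Theta>) (bB \<Theta>) \<notin> {bp \<Theta>, bq \<Theta>, br \<Theta>, bs \<Theta>}"
  using assms unfolding is_obox_def by (elim conjE) simp

lemma is_obox_eqI:
  assumes "is_obox \<Theta>" "is_obox \<Theta>'"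
    and "bp \<Theta> = bp \<Theta>'" "bq \<Theta> = bq \<Theta>'" "br \<Theta> = br \<Theta>'" "bs \<Theta> = bs \<Theta>'"
    "bt \<Theta> = bt \<Theta>'" "bb \<Theta> = bb \<Theta>'"
  shows "\<Theta> = \<Theta>'"
  by (rule obox.expand)
    (simp only: is_obox_joins[OF assms(1)] is_obox_joins[OF assms(2)] assms(3-8) simp_thms)

lemma obox_frame:
  assumes "is_obox \<Theta>"
  obtains M where "invertible M"
    "bp \<Theta> = proj (M *v vec3 (-1) 1 0)" "bq \<Theta> = proj (M *v vec3 1 1 0)"
    "br \<Theta> = proj (M *v vec3 1 0 1)" "bs \<Theta> = proj (M *v vec3 (-1) 0 1)"
    "meet (bT \<Theta>) (bB \<Theta>) = proj (M *v vec3 1 0 0)"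
proof -
  note PP = is_obox_in_PP[OF assms] and TB = is_obox_distinct(3)[OF assms]
  obtain vp vq vr vs where
    p: "vp \<noteq> 0" "bp \<Theta> = proj vp" and q: "vq \<noteq> 0" "bq \<Theta> = proj vq" and
    r: "vr \<noteq> 0" "br \<Theta> = proj vr" and s: "vs \<noteq> 0" "bs \<Theta> = proj vs"
    using PP by (metis PP_E)
  have T: "bT \<Theta> = proj (cross3 vp vq)" and B: "bB \<Theta> = proj (cross3 vr vs)"
    using is_obox_distinct(1,2)[OF assms] is_obox_joins(1,2)[OF assms] p q r s
    by (simp_all add: join_proj)
  \<comment> \<open>None of \<open>p, q, r, s\<close> is the intersection point \<open>TB\<close>, so none lies on both lines.\<close>
  have off: "\<not> (cross3 vp vq \<bullet> v = 0 \<and> cross3 vr vs \<bullet> v = 0)"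
    if "v \<noteq> 0" "proj v \<in> {bp \<Theta>, bq \<Theta>, br \<Theta>, bs \<Theta>}" for v
  proof
    assume "cross3 vp vq \<bullet> v = 0 \<and> cross3 vr vs \<bullet> v = 0"
    then have "meet (bT \<Theta>) (bB \<Theta>) = proj v"
      using PP TB that(1) by (intro meet_eq) (simp_all add: T B incid_proj_iff proj_in_PP)
    with is_obox_meet_notin[OF assms] that(2) show False by simp
  qed
  have "cross3 vr vs \<bullet> vr = 0" "cross3 vr vs \<bullet> vs = 0"
    "cross3 vp vq \<bullet> vp = 0" "cross3 vp vq \<bullet> vq = 0"
    by (simp_all add: dot_cross_self)
  then have "cross3 vp vq \<bullet> vr \<noteq> 0" "cross3 vp vq \<bullet> vs \<noteq> 0"
    "cross3 vr vs \<bullet> vp \<noteq> 0" "cross3 vr vs \<bullet> vq \<noteq> 0"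
    using off[of vr] off[of vs] off[of vp] off[of vq] p q r s by auto
  then obtain M where M: "invertible M"
    "proj (M *v vec3 (-1) 1 0) = proj vp" "proj (M *v vec3 1 1 0) = proj vq"
    "proj (M *v vec3 1 0 1) = proj vr" "proj (M *v vec3 (-1) 0 1) = proj vs"
    "M *v vec3 1 0 0 = cross3 (cross3 vp vq) (cross3 vr vs)"
    by (rule frame_matrix)
  have "meet (bT \<Theta>) (bB \<Theta>) = proj (M *v vec3 1 0 0)"
  proof (rule meet_eq[OF PP(5,6) TB])
    show "proj (M *v vec3 1 0 0) \<in> PP"
      using M(1) by (simp add: proj_matrix_in_PP)
    show "incid (proj (M *v vec3 1 0 0)) (bT \<Theta>)" "incid (proj (M *v vec3 1 0 0)) (bB \<Theta>)"
      unfolding T B M(6) incid_proj_iff by (simp_all add: dot_cross_self)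
  qed
  with M p q r s show ?thesis using that by simp
qed

lemma convex_box_std_box:
  assumes "convex_box \<Theta>"
  obtains M zt zb where "invertible M" "-1 < zt" "zt < 1" "-1 < zb" "zb < 1"
    "\<Theta> = std_box M zt zb"
proof -
  have ob: "is_obox \<Theta>"
    using assms by (simp add: convex_box_def)
  then obtain M where M: "invertible M"
    "bp \<Theta> = proj (M *v vec3 (-1) 1 0)" "bq \<Theta> = proj (M *v vec3 1 1 0)"
    "br \<Theta> = proj (M *v vec3 1 0 1)" "bs \<Theta> = proj (M *v vec3 (-1) 0 1)"
    "meet (bT \<Theta>) (bB \<Theta>) = proj (M *v vec3 1 0 0)"
    by (rule obox_frame)
  have "separates (bp \<Theta>) (bq \<Theta>) (bt \<Theta>) (meet (bT \<Theta>) (bB \<Theta>))"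
    "separates (br \<Theta>) (bs \<Theta>) (bb \<Theta>) (meet (bT \<Theta>) (bB \<Theta>))"
    using assms by (simp_all add: convex_box_def)
  then obtain zt zb where zt: "-1 < zt" "zt < 1" "bt \<Theta> = proj (M *v vec3 zt 1 0)"
    and zb: "-1 < zb" "zb < 1" "bb \<Theta> = proj (M *v vec3 zb 0 1)"
    unfolding M(2-6) separates_std_box_top[OF M(1)] separates_std_box_bottom[OF M(1)] by blast
  have "\<Theta> = std_box M zt zb"
    using ob is_obox_std_box[OF M(1)] M zt zb by (intro is_obox_eqI) simp_all
  with M(1) zt zb show ?thesis using that by blast
qed

section \<open>The action of \<open>\<G>\<close> and of \<open>j\<close> on standard boxes\<close>

lemma proj_act_std_box:
  assumes "invertible A" "invertible M"
  shows "proj_act A (std_box M zt zb) = std_box (A ** M) zt zb"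
  using assms by (simp add: proj_act_def std_box_def image_proj matrix_vector_mul_assoc dinv_mult)

definition reflection_x :: "real^3^3" where
  "reflection_x = (\<chi> i. if i = 1 then vec3 (-1) 0 0 else if i = 2 then vec3 0 1 0 else vec3 0 0 1)"

lemma reflection_x_mult: "reflection_x *v v = vec3 (- v$1) (v$2) (v$3)"
  by (simp add: reflection_x_def matrix_vector_mult_def vec_eq_iff_3 sum_3)

lemma reflection_x_squared: "reflection_x ** reflection_x = mat 1"
  by (simp add: reflection_x_def matrix_matrix_mult_def mat_def vec_eq_iff forall_3 sum_3 vec3_def)

lemma invertible_reflection_x: "invertible reflection_x"
  unfolding invertible_def using reflection_x_squared by blast

lemma dinv_reflection_x: "dinv reflection_x = reflection_x"
proof -
  have "transpose reflection_x = reflection_x"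
    by (simp add: reflection_x_def transpose_def vec_eq_iff forall_3 vec3_def)
  then show ?thesis
    by (simp add: matrix_inv_unique reflection_x_squared)
qed

lemma jflip_std_box:
  assumes "invertible M"
  shows "jflip (std_box M zt zb) = std_box (M ** reflection_x) (- zt) (- zb)"
  using assms
  by (simp add: jflip_def std_box_def dinv_mult invertible_reflection_x dinv_reflection_x
      matrix_vector_mul_assoc[symmetric] reflection_x_mult)
    (intro conjI; rule proj_matrix_rescale[where c = "-1"]; simp)

text \<open>Up to scalars, \<open>dual_frame zt zb\<close> maps the frame of the box with parameters
  \<open>(-zb, zt)\<close> onto the coordinates of the lines \<open>P, Q, S, R, T, B\<close> of the box with parameters
  \<open>(zt, zb)\<close>, and its transpose maps the points \<open>q, p, r, s, t, b\<close> of the latter onto the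
  lines of the former.\<close>
definition dual_frame :: "real \<Rightarrow> real \<Rightarrow> real^3^3" where
  "dual_frame zt zb = (\<chi> i. if i = 1 then vec3 (-1) (-zb) zt
     else if i = 2 then vec3 zt (zt * zb) (-1) else vec3 zb 1 (- (zt * zb)))"

lemma dual_frame_mult:
  "dual_frame zt zb *v v = vec3 (- v$1 - zb * v$2 + zt * v$3) (zt * v$1 + zt * zb * v$2 - v$3)
     (zb * v$1 + v$2 - zt * zb * v$3)"
  by (simp add: dual_frame_def matrix_vector_mult_def vec_eq_iff_3 sum_3 algebra_simps)

lemma vector_dual_frame_mult:
  "v v* dual_frame zt zb = vec3 (- v$1 + zt * v$2 + zb * v$3)
     (- zb * v$1 + zt * zb * v$2 + v$3) (zt * v$1 - v$2 - zt * zb * v$3)"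
  by (simp add: dual_frame_def vector_matrix_mult_def vec_eq_iff_3 sum_3 algebra_simps)

lemma invertible_dual_frame:
  assumes "zt \<noteq> 1" "zt \<noteq> -1" "zb \<noteq> 1" "zb \<noteq> -1"
  shows "invertible (dual_frame zt zb)"
proof -
  have "det (dual_frame zt zb) = - ((1 - zt) * (1 + zt) * (1 - zb) * (1 + zb))"
    by (simp add: det_3 dual_frame_def algebra_simps)
  with assms show ?thesis
    by (simp add: invertible_det_nz)
qed

lemma dual_act_std_box:
  assumes C: "invertible C" and M: "invertible M"
    and z: "zt \<noteq> 1" "zt \<noteq> -1" "zb \<noteq> 1" "zb \<noteq> -1"
  shows "dual_act C (std_box M zt zb) = std_box (dinv C ** dinv M ** dual_frame zt zb) (- zb) zt"
proof -
  let ?D = "dual_frame zt zb" and ?X = "dinv C ** dinv M"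
  have Y: "invertible (?X ** ?D)"
    by (intro invertible_mult invertible_dinv invertible_dual_frame C M z)
  have pt: "proj (dinv C *v (dinv M *v w)) = proj (dinv C *v (dinv M *v (?D *v v)))"
    if "?D *v v = c *\<^sub>R w" "c \<noteq> 0" for v w c
    using that by (simp add: matrix_vector_mult_scaleR)
  have ln: "proj (C *v (M *v u)) = proj (dinv (?X ** ?D) *v w)"
    if "transpose ?D *v u = c *\<^sub>R w" "c \<noteq> 0" for u w c
  proof -
    have "transpose (?X ** ?D) *v (C *v (M *v u)) = transpose ?D *v u"
      using C M by (simp add: matrix_transpose_mul transpose_dinv matrix_vector_mul_assoc[symmetric]
          matrix_mul_assoc matrix_inv_left)
    with that show ?thesis
      by (metis proj_dinv_eq[OF Y])
  qed
  have nz: "1 - zb \<noteq> 0" "1 + zb \<noteq> 0" "1 - zt \<noteq> 0" "1 + zt \<noteq> 0"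
    "1 - zb * zb \<noteq> 0" "1 - zt * zt \<noteq> 0"
    using z by (auto simp: algebra_simps square_eq_1_iff)
  note [simp] = dual_frame_mult vector_dual_frame_mult
  show ?thesis
    unfolding dual_act_def Let_def
    apply (rule obox.expand)
    apply (simp only: obox.sel std_box_sel image_proj matrix_vector_mul_assoc[symmetric])
    apply (intro conjI)
               apply (rule pt[where c = "1 - zb"]; use nz in \<open>simp add: algebra_simps\<close>)
              apply (rule pt[where c = "- (1 + zb)"]; use nz in \<open>simp add: algebra_simps\<close>)
             apply (rule pt[where c = "1 - zt"]; use nz in \<open>simp add: algebra_simps\<close>)
            apply (rule pt[where c = "- (1 + zt)"]; use nz in \<open>simp add: algebra_simps\<close>)
           apply (rule pt[where c = "1 - zb * zb"]; use nz in \<open>simp add: algebra_simps\<close>)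
          apply (rule pt[where c = "- (1 - zt * zt)"]; use nz in \<open>simp add: algebra_simps\<close>)
         apply (rule ln[where c = "zt - 1"]; use nz in \<open>simp add: algebra_simps\<close>)
        apply (rule ln[where c = "1 + zt"]; use nz in \<open>simp add: algebra_simps\<close>)
       apply (rule ln[where c = "1 - zb"]; use nz in \<open>simp add: algebra_simps\<close>)
      apply (rule ln[where c = "- (1 + zb)"]; use nz in \<open>simp add: algebra_simps\<close>)
     apply (rule ln[where c = "- (1 - zt * zt)"]; use nz in \<open>simp add: algebra_simps\<close>)
    apply (rule ln[where c = "1 - zb * zb"]; use nz in \<open>simp add: algebra_simps\<close>)
    done
qed

section \<open>Orbits\<close>

lemma rot_funpow_4: "(rot ^^ 4) z = z"
  by (simp add: rot_def numeral_eq_Suc)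

lemma rot_orbit_iff:
  "(\<exists>k. w = (rot ^^ k) z) \<longleftrightarrow> w = z \<or> w = rot z \<or> w = rot (rot z) \<or> w = rot (rot (rot z))"
proof -
  have "(\<exists>k. w = (rot ^^ k) z) \<longleftrightarrow> (\<exists>k < 4. w = (rot ^^ k) z)"
    using funpow_mod_eq[OF rot_funpow_4] by (metis mod_less_divisor zero_less_numeral)
  also have "\<dots> \<longleftrightarrow> w = z \<or> w = rot z \<or> w = rot (rot z) \<or> w = rot (rot (rot z))"
    by (simp add: numeral_eq_Suc less_Suc_eq conj_disj_distribR ex_disj_distrib)
  finally show ?thesis .
qed

lemma G_equiv_std_box_same_params:
  assumes M: "invertible M" and M': "invertible M'"
  shows "G_equiv (std_box M zt zb) (std_box M' zt zb)"
proof -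
  let ?A = "M' ** matrix_inv M"
  have A: "invertible ?A"
    using M M' by (simp add: invertible_mult invertible_matrix_inv)
  have "?A ** M = M'"
    using M by (simp add: matrix_mul_assoc[symmetric] matrix_inv_left)
  then have "proj_act ?A (std_box M zt zb) = std_box M' zt zb"
    using A M by (simp add: proj_act_std_box)
  then show ?thesis
    unfolding G_equiv_def using A by metis
qed

lemma G_equiv_std_box_rot_params:
  assumes M: "invertible M" and M': "invertible M'"
    and z: "zt \<noteq> 1" "zt \<noteq> -1" "zb \<noteq> 1" "zb \<noteq> -1"
  shows "G_equiv (std_box M zt zb) (std_box M' (- zb) zt)"
proof -
  let ?D = "dual_frame zt zb"
  let ?Y = "M' ** matrix_inv ?D ** transpose M"
  let ?C = "transpose (matrix_inv ?Y)"
  have D: "invertible ?D"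
    using invertible_dual_frame[OF z] .
  have Y: "invertible ?Y"
    using M M' D by (simp add: invertible_mult invertible_matrix_inv transpose_invertible)
  then have C: "invertible ?C"
    by (simp add: invertible_matrix_inv transpose_invertible)
  have "dinv ?C ** dinv M ** ?D = M' ** matrix_inv ?D ** (transpose M ** dinv M) ** ?D"
    using Y by (simp add: matrix_inv_matrix_inv matrix_mul_assoc)
  also have "\<dots> = M'"
    using M D by (simp add: matrix_inv_right transpose_invertible matrix_mul_assoc[symmetric]
        matrix_inv_left)
  finally have "dual_act ?C (std_box M zt zb) = std_box M' (- zb) zt"
    using C M z by (simp add: dual_act_std_box)
  then show ?thesis
    unfolding G_equiv_def using C by metis
qed

lemma G_equiv_std_box_iff:
  assumes M: "invertible M" and M': "invertible M'"
    and z: "zt \<noteq> 1" "zt \<noteq> -1" "zb \<noteq> 1" "zb \<noteq> -1"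
  shows "G_equiv (std_box M zt zb) (std_box M' wt wb) \<longleftrightarrow>
    (wt, wb) = (zt, zb) \<or> (wt, wb) = rot (zt, zb)"
proof
  assume "G_equiv (std_box M zt zb) (std_box M' wt wb)"
  then obtain A where A: "invertible A" and
    "std_box M' wt wb = std_box (A ** M) zt zb \<or>
     std_box M' wt wb = std_box (dinv A ** dinv M ** dual_frame zt zb) (- zb) zt"
    unfolding G_equiv_def using M z by (auto simp: proj_act_std_box dual_act_std_box)
  then have "params (std_box M' wt wb) = params (std_box (A ** M) zt zb) \<or>
    params (std_box M' wt wb) = params (std_box (dinv A ** dinv M ** dual_frame zt zb) (- zb) zt)"
    by metis
  then show "(wt, wb) = (zt, zb) \<or> (wt, wb) = rot (zt, zb)"
    using A M M' z
    by (simp add: params_std_box invertible_mult invertible_dinv invertible_dual_frame rot_def)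
next
  assume "(wt, wb) = (zt, zb) \<or> (wt, wb) = rot (zt, zb)"
  then show "G_equiv (std_box M zt zb) (std_box M' wt wb)"
    using G_equiv_std_box_same_params[OF M M'] G_equiv_std_box_rot_params[OF M M' z]
    by (auto simp: rot_def)
qed

lemma marked_equiv_std_box_iff:
  assumes M: "invertible M" and M': "invertible M'"
    and z: "zt \<noteq> 1" "zt \<noteq> -1" "zb \<noteq> 1" "zb \<noteq> -1"
  shows "marked_equiv (std_box M zt zb) (std_box M' wt wb) \<longleftrightarrow>
    (\<exists>k. (wt, wb) = (rot ^^ k) (zt, zb))"
proof -
  have "jflip (std_box M' wt wb) = std_box (M' ** reflection_x) (- wt) (- wb)"
    using M' by (rule jflip_std_box)
  then have "marked_equiv (std_box M zt zb) (std_box M' wt wb) \<longleftrightarrow>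
      (wt, wb) = (zt, zb) \<or> (wt, wb) = rot (zt, zb) \<or>
      (- wt, - wb) = (zt, zb) \<or> (- wt, - wb) = rot (zt, zb)"
    unfolding marked_equiv_def
    using G_equiv_std_box_iff[OF M M' z] G_equiv_std_box_iff[OF M _ z]
      invertible_mult[OF M' invertible_reflection_x]
    by auto
  then show ?thesis
    unfolding rot_orbit_iff by (auto simp: rot_def)
qed

lemma params_convex_box:
  "convex_box \<Theta> \<Longrightarrow> params \<Theta> \<in> {-1<..<1} \<times> {-1<..<1}"
  by (elim convex_box_std_box) (simp add: params_std_box)

lemma convex_box_jflip: "convex_box \<Theta> \<Longrightarrow> convex_box (jflip \<Theta>)"
  by (elim convex_box_std_box)
    (simp add: jflip_std_box convex_std_box invertible_mult invertible_reflection_x)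

lemma convex_box_proj_act: "convex_box \<Theta> \<Longrightarrow> invertible A \<Longrightarrow> convex_box (proj_act A \<Theta>)"
  by (elim convex_box_std_box) (simp add: proj_act_std_box convex_std_box invertible_mult)

lemma convex_box_dual_act: "convex_box \<Theta> \<Longrightarrow> invertible A \<Longrightarrow> convex_box (dual_act A \<Theta>)"
  by (elim convex_box_std_box)
    (simp add: dual_act_std_box convex_std_box invertible_mult invertible_dinv invertible_dual_frame)

lemma marked_equiv_convex_iff:
  assumes "convex_box \<Theta>" "convex_box \<Theta>'"
  shows "marked_equiv \<Theta> \<Theta>' \<longleftrightarrow> (\<exists>k. params \<Theta>' = (rot ^^ k) (params \<Theta>))"
proof -
  obtain M zt zb where M: "invertible M" and z: "-1 < zt" "zt < 1" "-1 < zb" "zb < 1"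
    and \<Theta>: "\<Theta> = std_box M zt zb"
    using assms(1) by (rule convex_box_std_box)
  obtain M' wt wb where M': "invertible M'" and \<Theta>': "\<Theta>' = std_box M' wt wb"
    using assms(2) by (rule convex_box_std_box)
  show ?thesis
    using z by (simp add: \<Theta> \<Theta>' params_std_box M M' marked_equiv_std_box_iff)
qed

lemma convex_box_with_params:
  assumes "z \<in> {-1<..<1} \<times> {-1<..<1}"
  shows "\<exists>\<Theta>. convex_box \<Theta> \<and> params \<Theta> = z"
proof -
  have I: "invertible (mat 1 :: real^3^3)"
    by (simp add: invertible_det_nz)
  show ?thesis
    using assms convex_std_box[OF I] params_std_box[OF I, of "fst z" "snd z"]
    by (auto simp: mem_Times_iff)
qed

theorem corollary4p7:
  shows "(\<forall>\<Theta>. convex_box \<Theta> \<longrightarrow> params \<Theta> \<in> {-1<..<1} \<times> {-1<..<1})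
    \<and> (\<forall>\<Theta>. convex_box \<Theta> \<longrightarrow> convex_box (jflip \<Theta>) \<and>
          (\<forall>A. invertible A \<longrightarrow> convex_box (proj_act A \<Theta>) \<and> convex_box (dual_act A \<Theta>)))
    \<and> (\<forall>\<Theta> \<Theta>'. convex_box \<Theta> \<longrightarrow> convex_box \<Theta>' \<longrightarrow>
          (marked_equiv \<Theta> \<Theta>' \<longleftrightarrow> (\<exists>k::nat. params \<Theta>' = (rot ^^ k) (params \<Theta>))))
    \<and> (\<forall>z \<in> {-1<..<1} \<times> {-1<..<1}. \<exists>\<Theta>. convex_box \<Theta> \<and> params \<Theta> = z)"
  by (simp add: params_convex_box convex_box_jflip convex_box_proj_act convex_box_dual_act
      marked_equiv_convex_iff convex_box_with_params)

end
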